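(* Let $\Sigma$ be an oriented graph with $\det W(\Sigma)\neq 0$. Then there exists a unique regular rational orthogonal matrix $Q_0\in\mathcal{Q}(\Sigma)$ such that $Q_0^{\rm T}S(\Sigma)Q_0=S(\Sigma^{\rm T})$. Moreover, if $\Sigma$ is not isomorphic to $\Sigma^{\rm T}$, then $Q_0$ is not a permutation matrix.
   Context: An oriented graph on vertices $v_1,\dots,v_n$ is a simple graph with each edge directed. Its skew-adjacency matrix $S(\Sigma)=(s_{ij})$ has $s_{ij}=1$ if $(v_i,v_j)$ is an arc, $-1$ if $(v_j,v_i)$ is an arc, $0$ otherwise. The converse $\Sigma^{\rm T}$ reverses every arc, so $S(\Sigma^{\rm T})=-S(\Sigma)$. Two oriented graphs are isomorphic if their skew-adjacency matrices are conjugate by a permutation matrix; they are generalized cospectral if their skew-adjacency matrices $S$ have the same spectrum and the matrices $J-I-S$ have the same spectrum. With $e$ the all-one vector, $W(\Sigma)=[e,Se,\dots,S^{n-1}e]$, $S=S(\Sigma)$. A rational orthogonal matrix $Q$ is regular if $Qe=e$. $\mathcal{Q}(\Sigma)$ is the set of regular rational orthogonal $Q$ with $Q^{\rm T}S(\Sigma)Q=S(\Delta)$ for some oriented graph $\Delta$ generalized cospectral with $\Sigma$. *)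

theory Defs
  imports "Jordan_Normal_Form.Matrix" "Jordan_Normal_Form.Determinant" "Jordan_Normal_Form.Char_Poly"
begin

(* An oriented graph on vertices 0..n-1, given by its arc relation:
   arc A i j means (v_i, v_j) is an arc. Simple: no loops, no pair of opposite arcs. *)
definition oriented_graph :: "nat \<Rightarrow> (nat \<Rightarrow> nat \<Rightarrow> bool) \<Rightarrow> bool" where
  "oriented_graph n A \<longleftrightarrow>
     (\<forall>i j. A i j \<longrightarrow> i < n \<and> j < n \<and> i \<noteq> j \<and> \<not> A j i)"

definition converse_og :: "(nat \<Rightarrow> nat \<Rightarrow> bool) \<Rightarrow> (nat \<Rightarrow> nat \<Rightarrow> bool)" where
  "converse_og A = (\<lambda>i j. A j i)"

definition skew_adj :: "nat \<Rightarrow> (nat \<Rightarrow> nat \<Rightarrow> bool) \<Rightarrow> real mat" where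
  "skew_adj n A = mat n n (\<lambda>(i,j). if A i j then 1 else if A j i then -1 else 0)"

definition ones_vec :: "nat \<Rightarrow> real vec" where
  "ones_vec n = vec n (\<lambda>_. 1)"

definition J_mat :: "nat \<Rightarrow> real mat" where
  "J_mat n = mat n n (\<lambda>_. 1)"

definition walk_mat :: "nat \<Rightarrow> (nat \<Rightarrow> nat \<Rightarrow> bool) \<Rightarrow> real mat" where
  "walk_mat n A = mat_of_cols n (map (\<lambda>k. (skew_adj n A ^\<^sub>m k) *\<^sub>v ones_vec n) [0..<n])"

(* spectrum as multiset of eigenvalues = characteristic polynomial *)
definition gen_cospectral :: "nat \<Rightarrow> (nat \<Rightarrow> nat \<Rightarrow> bool) \<Rightarrow> (nat \<Rightarrow> nat \<Rightarrow> bool) \<Rightarrow> bool" where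
  "gen_cospectral n A B \<longleftrightarrow>
     char_poly (skew_adj n A) = char_poly (skew_adj n B) \<and>
     char_poly (J_mat n - 1\<^sub>m n - skew_adj n A) = char_poly (J_mat n - 1\<^sub>m n - skew_adj n B)"

definition rational_mat :: "real mat \<Rightarrow> bool" where
  "rational_mat Q \<longleftrightarrow> (\<forall>i < dim_row Q. \<forall>j < dim_col Q. Q $$ (i,j) \<in> \<rat>)"

definition orth_mat :: "nat \<Rightarrow> real mat \<Rightarrow> bool" where
  "orth_mat n Q \<longleftrightarrow> Q \<in> carrier_mat n n \<and> transpose_mat Q * Q = 1\<^sub>m n"

definition regular_mat :: "nat \<Rightarrow> real mat \<Rightarrow> bool" where
  "regular_mat n Q \<longleftrightarrow> Q *\<^sub>v ones_vec n = ones_vec n"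

definition QSet :: "nat \<Rightarrow> (nat \<Rightarrow> nat \<Rightarrow> bool) \<Rightarrow> real mat set" where
  "QSet n A = {Q. orth_mat n Q \<and> rational_mat Q \<and> regular_mat n Q \<and>
     (\<exists>D. oriented_graph n D \<and> gen_cospectral n A D \<and>
          transpose_mat Q * skew_adj n A * Q = skew_adj n D)}"

definition perm_matrix :: "nat \<Rightarrow> real mat \<Rightarrow> bool" where
  "perm_matrix n P \<longleftrightarrow> (\<exists>p. p permutes {..<n} \<and>
     P = mat n n (\<lambda>(i,j). if i = p j then 1 else 0))"

definition iso_og :: "nat \<Rightarrow> (nat \<Rightarrow> nat \<Rightarrow> bool) \<Rightarrow> (nat \<Rightarrow> nat \<Rightarrow> bool) \<Rightarrow> bool" where
  "iso_og n A B \<longleftrightarrow> (\<exists>P. perm_matrix n P \<and>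
     transpose_mat P * skew_adj n A * P = skew_adj n B)"

end

theory Submission
  imports Defs
begin

(* Write S = S(Sigma), e for the all-one vector and K(M) = [e, M e, ..., M^(n-1) e], so that
   W(Sigma) = K(S) and W(Sigma^T) = K(-S). Skew-symmetry gives
   (S^i e)^T (S^j e) = (-1)^i e^T S^(i+j) e, and e^T S^k e = 0 for odd k; hence
   K(-S)^T S^m K(-S) = (-1)^m K(S)^T S^m K(S), which for m = 0, 1 says that
   Q0 = K(-S) K(S)^(-1) is orthogonal with Q0^T S Q0 = -S. It is rational because W(Sigma) is
   an invertible integral matrix, and regular because Q0 K(S) = K(-S) and both K(S) and K(-S)
   have first column e. Conversely, an orthogonal Q with Q^T S Q = -S anticommutes with S, so if
   also Q e = e then Q S^k e = (-S)^k e, i.e. Q K(S) = K(-S), which forces Q = Q0.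
   The second claim holds because a permutation matrix Q0 would be an isomorphism from Sigma
   to Sigma^T. *)

lemma pow_mat_mult_vec_carrier [simp]:
  "A \<in> carrier_mat n n \<Longrightarrow> v \<in> carrier_vec n \<Longrightarrow> (A ^\<^sub>m k) *\<^sub>v v \<in> carrier_vec n"
  by (rule mult_mat_vec_carrier[OF pow_carrier_mat])

definition krylov_mat :: "nat \<Rightarrow> 'a :: semiring_1 mat \<Rightarrow> 'a vec \<Rightarrow> 'a mat" where
  "krylov_mat n S e = mat_of_cols n (map (\<lambda>k. (S ^\<^sub>m k) *\<^sub>v e) [0..<n])"

lemma krylov_mat_dim [simp]:
  "dim_row (krylov_mat n S e) = n" "dim_col (krylov_mat n S e) = n"
  unfolding krylov_mat_def by simp_all

lemma krylov_mat_carrier [simp]: "krylov_mat n S e \<in> carrier_mat n n"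
  by (rule carrier_matI) simp_all

lemma col_krylov_mat:
  assumes "S \<in> carrier_mat n n" and "e \<in> carrier_vec n" and "k < n"
  shows "col (krylov_mat n S e) k = (S ^\<^sub>m k) *\<^sub>v e"
  unfolding krylov_mat_def using assms
  by (subst col_mat_of_cols) auto

lemma (in semiring_hom) krylov_mat_hom:
  assumes "S \<in> carrier_mat n n" and "e \<in> carrier_vec n"
  shows "krylov_mat n (mat\<^sub>h S) (vec\<^sub>h e) = mat\<^sub>h (krylov_mat n S e)"
proof (rule mat_col_eqI)
  fix k assume "k < dim_col (mat\<^sub>h (krylov_mat n S e))"
  then have k: "k < n" by simp
  have "col (krylov_mat n (mat\<^sub>h S) (vec\<^sub>h e)) k = (mat\<^sub>h S ^\<^sub>m k) *\<^sub>v vec\<^sub>h e"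
    using assms k by (intro col_krylov_mat) simp_all
  also have "\<dots> = vec\<^sub>h ((S ^\<^sub>m k) *\<^sub>v e)"
    unfolding mat_hom_pow[OF assms(1), symmetric]
    by (rule mult_mat_vec_hom[symmetric, OF pow_carrier_mat[OF assms(1)] assms(2)])
  also have "\<dots> = vec\<^sub>h (col (krylov_mat n S e) k)"
    unfolding col_krylov_mat[OF assms k] ..
  also have "\<dots> = col (mat\<^sub>h (krylov_mat n S e)) k"
    using k by (intro col_map_mat[symmetric]) simp
  finally show "col (krylov_mat n (mat\<^sub>h S) (vec\<^sub>h e)) k = col (mat\<^sub>h (krylov_mat n S e)) k" .
qed simp_all

lemma pow_mat_add:
  assumes "A \<in> carrier_mat n n"
  shows "A ^\<^sub>m (i + j) = A ^\<^sub>m i * A ^\<^sub>m j"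
proof (induction j)
  case 0
  show ?case using assms by simp
next
  case (Suc j)
  then show ?case using assms by (simp add: assoc_mult_mat[of _ n n _ n _ n])
qed

lemma pow_mat_Suc_mult_vec:
  assumes "A \<in> carrier_mat n n" and "v \<in> carrier_vec n"
  shows "(A ^\<^sub>m Suc k) *\<^sub>v v = A *\<^sub>v ((A ^\<^sub>m k) *\<^sub>v v)"
  using pow_mat_add[OF assms(1), of 1 k] assms by (simp add: assoc_mult_mat_vec[of _ n n _ n])

lemma pow_mat_add_mult_vec:
  assumes "A \<in> carrier_mat n n" and "v \<in> carrier_vec n"
  shows "(A ^\<^sub>m (i + j)) *\<^sub>v v = (A ^\<^sub>m i) *\<^sub>v ((A ^\<^sub>m j) *\<^sub>v v)"
  using pow_mat_add[OF assms(1), of i j] assms by (simp add: assoc_mult_mat_vec[of _ n n _ n])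

lemma uminus_pow_mat_mult_vec:
  fixes A :: "'a :: comm_ring_1 mat"
  assumes A: "A \<in> carrier_mat n n" and v: "v \<in> carrier_vec n"
  shows "((- A) ^\<^sub>m k) *\<^sub>v v = (-1) ^ k \<cdot>\<^sub>v ((A ^\<^sub>m k) *\<^sub>v v)"
proof (induction k)
  case 0
  show ?case using A v by simp
next
  case (Suc k)
  have "((- A) ^\<^sub>m Suc k) *\<^sub>v v = (- A) *\<^sub>v ((-1) ^ k \<cdot>\<^sub>v ((A ^\<^sub>m k) *\<^sub>v v))"
    using A v unfolding Suc.IH[symmetric] by (intro pow_mat_Suc_mult_vec) auto
  also have "\<dots> = - ((-1) ^ k \<cdot>\<^sub>v (A *\<^sub>v ((A ^\<^sub>m k) *\<^sub>v v)))"
    using A v by (intro eq_vecI) auto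
  also have "\<dots> = (-1) ^ Suc k \<cdot>\<^sub>v ((A ^\<^sub>m Suc k) *\<^sub>v v)"
    unfolding pow_mat_Suc_mult_vec[OF A v] by (intro eq_vecI) auto
  finally show ?case .
qed

lemma congruence_mat_entry:
  fixes M X :: "'a :: comm_semiring_0 mat"
  assumes M: "M \<in> carrier_mat n n" and X: "X \<in> carrier_mat n n" and "i < n" and "j < n"
  shows "(transpose_mat M * X * M) $$ (i, j) = col M i \<bullet> (X *\<^sub>v col M j)"
proof -
  have "transpose_mat M * X * M = transpose_mat M * (X * M)"
    using M X by (intro assoc_mult_mat[of _ n n _ n _ n]) auto
  also have "\<dots> $$ (i, j) = row (transpose_mat M) i \<bullet> col (X * M) j"
    using assms by (intro index_mult_mat(1)) auto
  also have "row (transpose_mat M) i = col M i"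
    using assms by (intro row_transpose) auto
  also have "col (X * M) j = X *\<^sub>v col M j"
    using assms by (intro col_mult2) auto
  finally show ?thesis .
qed

lemma congruence_mult:
  fixes A B X :: "'a :: comm_semiring_0 mat"
  assumes A: "A \<in> carrier_mat n n" and B: "B \<in> carrier_mat n n" and X: "X \<in> carrier_mat n n"
  shows "transpose_mat (A * B) * X * (A * B) = transpose_mat B * (transpose_mat A * X * A) * B"
  using assms by (simp add: transpose_mult[OF A B] assoc_mult_mat[of _ n n _ n _ n])

lemma congruence_inverse:
  fixes W V X :: "'a :: comm_semiring_1 mat"
  assumes W: "W \<in> carrier_mat n n" and V: "V \<in> carrier_mat n n" and X: "X \<in> carrier_mat n n"
    and WV: "W * V = 1\<^sub>m n"
  shows "transpose_mat V * (transpose_mat W * X * W) * V = X"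
proof -
  have VW: "transpose_mat V * transpose_mat W = 1\<^sub>m n"
    using transpose_mult[OF W V] WV by simp
  have "transpose_mat V * (transpose_mat W * X * W) * V
      = (transpose_mat V * transpose_mat W) * X * (W * V)"
    using assms by (simp add: assoc_mult_mat[of _ n n _ n _ n])
  also have "\<dots> = X"
    unfolding VW WV using X by simp
  finally show ?thesis .
qed

lemma scalar_prod_skew_mult_vec:
  fixes S :: "'a :: comm_ring_1 mat"
  assumes S: "S \<in> carrier_mat n n" and skew: "transpose_mat S = - S"
    and u: "u \<in> carrier_vec n" and v: "v \<in> carrier_vec n"
  shows "(S *\<^sub>v u) \<bullet> v = - (u \<bullet> (S *\<^sub>v v))"
proof -
  have "(S *\<^sub>v u) \<bullet> v = v \<bullet> (S *\<^sub>v u)"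
    using S u v by (simp add: comm_scalar_prod[of _ n])
  also have "\<dots> = (transpose_mat S *\<^sub>v v) \<bullet> u"
    by (rule transpose_vec_mult_scalar[symmetric, OF S u v])
  also have "\<dots> = - (u \<bullet> (S *\<^sub>v v))"
    using S u v by (simp add: skew comm_scalar_prod[of _ n])
  finally show ?thesis .
qed

lemma anticommuting_mult_krylov_mat:
  fixes Q S :: "'a :: comm_ring_1 mat"
  assumes Q: "Q \<in> carrier_mat n n" and S: "S \<in> carrier_mat n n" and e: "e \<in> carrier_vec n"
    and Qe: "Q *\<^sub>v e = e" and QS: "Q * S = - (S * Q)"
  shows "Q * krylov_mat n S e = krylov_mat n (- S) e"
proof -
  have Q_krylov_vec: "Q *\<^sub>v ((S ^\<^sub>m k) *\<^sub>v e) = ((- S) ^\<^sub>m k) *\<^sub>v e" for k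
  proof (induction k)
    case 0
    show ?case using S e Qe by simp
  next
    case (Suc k)
    have "Q *\<^sub>v ((S ^\<^sub>m Suc k) *\<^sub>v e) = (Q * S) *\<^sub>v ((S ^\<^sub>m k) *\<^sub>v e)"
      unfolding pow_mat_Suc_mult_vec[OF S e]
      by (rule assoc_mult_mat_vec[symmetric, OF Q S pow_mat_mult_vec_carrier[OF S e]])
    also have "\<dots> = (- S) *\<^sub>v (Q *\<^sub>v ((S ^\<^sub>m k) *\<^sub>v e))"
      using Q S e unfolding QS by simp
    also have "\<dots> = ((- S) ^\<^sub>m Suc k) *\<^sub>v e"
      unfolding Suc.IH by (rule pow_mat_Suc_mult_vec[symmetric]) (use S e in auto)
    finally show ?case .
  qed
  show ?thesis
  proof (rule mat_col_eqI)
    fix k assume "k < dim_col (krylov_mat n (- S) e)"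
    then have k: "k < n" by simp
    then show "col (Q * krylov_mat n S e) k = col (krylov_mat n (- S) e) k"
      using Q S e by (simp add: col_mult2[of _ n n _ n] col_krylov_mat Q_krylov_vec)
  qed (use Q in simp_all)
qed

lemma orthogonal_congruence_uminus_anticommute:
  fixes Q S :: "'a :: field mat"
  assumes Q: "Q \<in> carrier_mat n n" and S: "S \<in> carrier_mat n n"
    and orth: "transpose_mat Q * Q = 1\<^sub>m n" and QSQ: "transpose_mat Q * S * Q = - S"
  shows "Q * S = - (S * Q)"
proof -
  have "Q * transpose_mat Q = 1\<^sub>m n"
    using mat_mult_left_right_inverse[OF transpose_carrier_mat[THEN iffD2, OF Q] Q orth] .
  then have "S * Q = (Q * transpose_mat Q) * S * Q"
    using S by simp
  also have "\<dots> = Q * (transpose_mat Q * S * Q)"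
    using Q S by (simp only: assoc_mult_mat[of _ n n _ n _ n] transpose_carrier_mat mult_carrier_mat)
  also have "\<dots> = - (Q * S)"
    unfolding QSQ using Q S by simp
  finally show ?thesis
    by simp
qed

context
  fixes S :: "'a :: field_char_0 mat" and e :: "'a vec" and n :: nat
  assumes S_carrier: "S \<in> carrier_mat n n" and S_skew: "transpose_mat S = - S"
    and e_carrier: "e \<in> carrier_vec n"
begin

lemmas krylov_vec_carrier = pow_mat_mult_vec_carrier[OF S_carrier e_carrier]

lemma krylov_scalar_prod_shift:
  "((S ^\<^sub>m i) *\<^sub>v e) \<bullet> ((S ^\<^sub>m j) *\<^sub>v e) = (-1) ^ i * (e \<bullet> ((S ^\<^sub>m (i + j)) *\<^sub>v e))"
proof (induction i arbitrary: j)
  case 0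
  show ?case using S_carrier e_carrier by simp
next
  case (Suc i)
  have "((S ^\<^sub>m Suc i) *\<^sub>v e) \<bullet> ((S ^\<^sub>m j) *\<^sub>v e)
      = - (((S ^\<^sub>m i) *\<^sub>v e) \<bullet> ((S ^\<^sub>m Suc j) *\<^sub>v e))"
    unfolding pow_mat_Suc_mult_vec[OF S_carrier e_carrier]
    by (rule scalar_prod_skew_mult_vec[OF S_carrier S_skew krylov_vec_carrier krylov_vec_carrier])
  then show ?case using Suc.IH[of "Suc j"] by simp
qed

lemma scalar_prod_odd_krylov_vec:
  assumes "odd k"
  shows "e \<bullet> ((S ^\<^sub>m k) *\<^sub>v e) = 0"
proof -
  have "e \<bullet> ((S ^\<^sub>m k) *\<^sub>v e) = ((S ^\<^sub>m k) *\<^sub>v e) \<bullet> e"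
    by (rule comm_scalar_prod[OF e_carrier krylov_vec_carrier])
  also have "\<dots> = - (e \<bullet> ((S ^\<^sub>m k) *\<^sub>v e))"
    using krylov_scalar_prod_shift[of k 0] S_carrier e_carrier assms by simp
  finally show ?thesis by simp
qed

lemma krylov_scalar_prod_sign:
  "(-1) ^ (i + j) * (((S ^\<^sub>m i) *\<^sub>v e) \<bullet> ((S ^\<^sub>m j) *\<^sub>v e))
   = ((S ^\<^sub>m i) *\<^sub>v e) \<bullet> ((S ^\<^sub>m j) *\<^sub>v e)"
proof (cases "even (i + j)")
  case False
  then show ?thesis by (simp add: krylov_scalar_prod_shift scalar_prod_odd_krylov_vec)
qed simp

lemma krylov_congruence_uminus:
  "transpose_mat (krylov_mat n (- S) e) * S ^\<^sub>m m * krylov_mat n (- S) e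
   = (-1) ^ m \<cdot>\<^sub>m (transpose_mat (krylov_mat n S e) * S ^\<^sub>m m * krylov_mat n S e)"
  (is "?L = (-1) ^ m \<cdot>\<^sub>m ?R")
proof (rule eq_matI)
  fix i j assume "i < dim_row ((-1) ^ m \<cdot>\<^sub>m ?R)" and "j < dim_col ((-1) ^ m \<cdot>\<^sub>m ?R)"
  then have i: "i < n" and j: "j < n" using S_carrier by simp_all
  let ?v = "\<lambda>k. (S ^\<^sub>m k) *\<^sub>v e"
  have col_uminus: "col (krylov_mat n (- S) e) k = (-1) ^ k \<cdot>\<^sub>v ?v k" if "k < n" for k
    using that S_carrier e_carrier by (simp add: col_krylov_mat uminus_pow_mat_mult_vec)
  have "?L $$ (i, j) = col (krylov_mat n (- S) e) i \<bullet> (S ^\<^sub>m m *\<^sub>v col (krylov_mat n (- S) e) j)"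
    using S_carrier i j by (intro congruence_mat_entry) auto
  also have "\<dots> = (-1) ^ (i + j) * (?v i \<bullet> ?v (m + j))"
    using i j S_carrier e_carrier
    by (simp add: col_uminus pow_mat_add_mult_vec mult_mat_vec[of _ n n] power_add mult_ac)
  also have "\<dots> = (-1) ^ m * ((-1) ^ (i + (m + j)) * (?v i \<bullet> ?v (m + j)))"
    by (simp add: power_add mult_ac)
  also have "\<dots> = (-1) ^ m * (?v i \<bullet> ?v (m + j))"
    unfolding krylov_scalar_prod_sign ..
  also have "\<dots> = (-1) ^ m * (col (krylov_mat n S e) i \<bullet> (S ^\<^sub>m m *\<^sub>v col (krylov_mat n S e) j))"
    using i j S_carrier e_carrier by (simp add: col_krylov_mat pow_mat_add_mult_vec)
  also have "\<dots> = (-1) ^ m * ?R $$ (i, j)"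
    unfolding congruence_mat_entry[OF krylov_mat_carrier pow_carrier_mat[OF S_carrier] i j] ..
  also have "\<dots> = ((-1) ^ m \<cdot>\<^sub>m ?R) $$ (i, j)"
    using S_carrier i j by simp
  finally show "?L $$ (i, j) = ((-1) ^ m \<cdot>\<^sub>m ?R) $$ (i, j)" .
qed (use S_carrier in simp_all)

lemma krylov_reflection:
  assumes V: "V \<in> carrier_mat n n"
    and KV: "krylov_mat n S e * V = 1\<^sub>m n" and VK: "V * krylov_mat n S e = 1\<^sub>m n"
  shows "transpose_mat (krylov_mat n (- S) e * V) * (krylov_mat n (- S) e * V) = 1\<^sub>m n"
    and "transpose_mat (krylov_mat n (- S) e * V) * S * (krylov_mat n (- S) e * V) = - S"
    and "(krylov_mat n (- S) e * V) *\<^sub>v e = e"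
proof -
  let ?K = "krylov_mat n S e" and ?K' = "krylov_mat n (- S) e"
  have congruence: "transpose_mat (?K' * V) * S ^\<^sub>m m * (?K' * V) = (-1) ^ m \<cdot>\<^sub>m S ^\<^sub>m m" for m
  proof -
    have G: "transpose_mat ?K * S ^\<^sub>m m * ?K \<in> carrier_mat n n"
      using S_carrier by (intro mult_carrier_mat[of _ n n _ n]) simp_all
    have "transpose_mat (?K' * V) * S ^\<^sub>m m * (?K' * V)
        = transpose_mat V * (transpose_mat ?K' * S ^\<^sub>m m * ?K') * V"
      using V S_carrier by (intro congruence_mult) auto
    also have "\<dots> = transpose_mat V * ((-1) ^ m \<cdot>\<^sub>m (transpose_mat ?K * S ^\<^sub>m m * ?K)) * V"
      unfolding krylov_congruence_uminus ..
    also have "\<dots> = (-1) ^ m \<cdot>\<^sub>m (transpose_mat V * (transpose_mat ?K * S ^\<^sub>m m * ?K) * V)"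
      using V G by (simp add: mult_smult_distrib[of _ n n] mult_smult_assoc_mat[of _ n n])
    also have "\<dots> = (-1) ^ m \<cdot>\<^sub>m S ^\<^sub>m m"
      unfolding congruence_inverse[OF krylov_mat_carrier V pow_carrier_mat[OF S_carrier] KV] ..
    finally show ?thesis .
  qed
  have "(1 :: 'a) \<cdot>\<^sub>m 1\<^sub>m n = 1\<^sub>m n"
    by (intro eq_matI) auto
  then show "transpose_mat (?K' * V) * (?K' * V) = 1\<^sub>m n"
    using congruence[of 0] V S_carrier by simp
  have "(-1 :: 'a) \<cdot>\<^sub>m S = - S"
    using S_carrier by (intro eq_matI) auto
  then show "transpose_mat (?K' * V) * S * (?K' * V) = - S"
    using congruence[of 1] V S_carrier by simp
  have Q_K: "(?K' * V) * ?K = ?K'"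
    using V VK by (simp add: assoc_mult_mat[of _ n n _ n _ n])
  show "(?K' * V) *\<^sub>v e = e"
  proof (cases "n = 0")
    case True
    then show ?thesis using V e_carrier by (intro eq_vecI) auto
  next
    case False
    then have "col ((?K' * V) * ?K) 0 = (?K' * V) *\<^sub>v col ?K 0"
      using V by (intro col_mult2[of _ n n _ n]) auto
    also have "col ?K 0 = e"
      using False S_carrier e_carrier by (simp add: col_krylov_mat)
    finally have "col ((?K' * V) * ?K) 0 = (?K' * V) *\<^sub>v e" .
    moreover have "col ?K' 0 = e"
      using False S_carrier e_carrier by (simp add: col_krylov_mat)
    ultimately show ?thesis
      unfolding Q_K by simp
  qed
qed

lemma krylov_reflection_unique:
  assumes V: "V \<in> carrier_mat n n" and KV: "krylov_mat n S e * V = 1\<^sub>m n"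
    and Q: "Q \<in> carrier_mat n n" and orth: "transpose_mat Q * Q = 1\<^sub>m n"
    and QSQ: "transpose_mat Q * S * Q = - S" and Qe: "Q *\<^sub>v e = e"
  shows "Q = krylov_mat n (- S) e * V"
proof -
  have "Q * krylov_mat n S e = krylov_mat n (- S) e"
    using Q S_carrier e_carrier Qe orthogonal_congruence_uminus_anticommute[OF Q S_carrier orth QSQ]
    by (rule anticommuting_mult_krylov_mat)
  moreover have "Q = (Q * krylov_mat n S e) * V"
    using Q V KV by (simp add: assoc_mult_mat[of _ n n _ n _ n])
  ultimately show ?thesis
    by simp
qed

end

lemma rational_mat_iff_of_rat: "rational_mat M \<longleftrightarrow> (\<exists>Mq. M = map_mat of_rat Mq)"
proof
  assume rat: "rational_mat M"
  have "M $$ (i, j) = of_rat (SOME q. M $$ (i, j) = of_rat q)"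
    if "i < dim_row M" and "j < dim_col M" for i j
  proof -
    have "M $$ (i, j) \<in> \<rat>"
      using rat that unfolding rational_mat_def by blast
    then obtain q where "M $$ (i, j) = of_rat q"
      by (auto elim: Rats_cases)
    then show ?thesis
      by (rule someI)
  qed
  then have "M = map_mat of_rat (map_mat (\<lambda>x. SOME q. x = of_rat q) M)"
    by (intro eq_matI) auto
  then show "\<exists>Mq. M = map_mat of_rat Mq" ..
next
  assume "\<exists>Mq. M = map_mat of_rat Mq"
  then show "rational_mat M"
    unfolding rational_mat_def by auto
qed

lemma rational_mat_mult:
  assumes "A \<in> carrier_mat nr n" and "B \<in> carrier_mat n nc"
    and "rational_mat A" and "rational_mat B"
  shows "rational_mat (A * B)"
proof -
  obtain Aq Bq where A: "A = map_mat of_rat Aq" and B: "B = map_mat of_rat Bq"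
    using assms(3,4) unfolding rational_mat_iff_of_rat by blast
  have "A * B = map_mat of_rat (Aq * Bq)"
    using assms(1,2) unfolding A B by (simp add: of_rat_hom.mat_hom_mult)
  then show ?thesis
    unfolding rational_mat_iff_of_rat by blast
qed

lemma rational_mat_inverse:
  assumes W: "W \<in> carrier_mat n n" and "rational_mat W" and "det W \<noteq> 0"
  obtains V where "V \<in> carrier_mat n n" and "W * V = 1\<^sub>m n" and "V * W = 1\<^sub>m n"
    and "rational_mat V"
proof -
  obtain Wq where Wq: "W = map_mat of_rat Wq"
    using assms(2) unfolding rational_mat_iff_of_rat by blast
  have Wq_carrier: "Wq \<in> carrier_mat n n"
    using W unfolding Wq by simp
  have "det Wq \<noteq> 0"
    using assms(3) unfolding Wq of_rat_hom.hom_det by simp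
  from det_non_zero_imp_unit[OF Wq_carrier this, of undefined]
  obtain Vq where Vq: "Vq \<in> carrier_mat n n" and "Vq * Wq = 1\<^sub>m n" and "Wq * Vq = 1\<^sub>m n"
    unfolding Units_def ring_mat_simps by auto
  then have "W * map_mat of_rat Vq = 1\<^sub>m n" and "map_mat of_rat Vq * W = 1\<^sub>m n"
    unfolding Wq of_rat_hom.mat_hom_mult[OF Wq_carrier Vq, symmetric]
      of_rat_hom.mat_hom_mult[OF Vq Wq_carrier, symmetric]
    by (simp_all add: of_rat_hom.mat_hom_one)
  moreover have "rational_mat (map_mat of_rat Vq)"
    unfolding rational_mat_iff_of_rat by blast
  ultimately show ?thesis
    using Vq by (intro that[of "map_mat of_rat Vq"]) simp_all
qed

lemma skew_adj_carrier [simp]: "skew_adj n A \<in> carrier_mat n n"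
  unfolding skew_adj_def by simp

lemma ones_vec_carrier [simp]: "ones_vec n \<in> carrier_vec n"
  unfolding ones_vec_def by simp

lemma walk_mat_krylov: "walk_mat n A = krylov_mat n (skew_adj n A) (ones_vec n)"
  unfolding walk_mat_def krylov_mat_def ..

lemma rational_walk_mat: "rational_mat (walk_mat n A)"
proof -
  define Sq :: "rat mat" where "Sq = mat n n (\<lambda>(i, j). if A i j then 1 else if A j i then -1 else 0)"
  have "skew_adj n A = map_mat of_rat Sq"
    unfolding skew_adj_def Sq_def by (intro eq_matI) auto
  moreover have "ones_vec n = map_vec of_rat (vec n (\<lambda>_. 1))"
    unfolding ones_vec_def by auto
  ultimately have "walk_mat n A = map_mat of_rat (krylov_mat n Sq (vec n (\<lambda>_. 1)))"
    unfolding walk_mat_krylov by (simp add: of_rat_hom.krylov_mat_hom Sq_def)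
  then show ?thesis
    unfolding rational_mat_iff_of_rat by blast
qed

lemma transpose_skew_adj:
  assumes "oriented_graph n A"
  shows "transpose_mat (skew_adj n A) = - skew_adj n A"
  using assms unfolding skew_adj_def oriented_graph_def by (intro eq_matI) auto

lemma skew_adj_converse_og: "skew_adj n (converse_og A) = transpose_mat (skew_adj n A)"
  unfolding skew_adj_def converse_og_def by (intro eq_matI) auto

lemma oriented_graph_converse_og: "oriented_graph n A \<Longrightarrow> oriented_graph n (converse_og A)"
  unfolding oriented_graph_def converse_og_def by blast

lemma gen_cospectral_converse_og: "gen_cospectral n A (converse_og A)"
proof -
  have "J_mat n - 1\<^sub>m n - transpose_mat (skew_adj n A)
      = transpose_mat (J_mat n - 1\<^sub>m n - skew_adj n A)"
    by (intro eq_matI) (auto simp: J_mat_def skew_adj_def)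
  moreover have "J_mat n - 1\<^sub>m n - skew_adj n A \<in> carrier_mat n n"
    by (rule minus_carrier_mat[OF skew_adj_carrier])
  ultimately show ?thesis
    unfolding gen_cospectral_def skew_adj_converse_og
    by (simp add: char_poly_transpose_mat[OF skew_adj_carrier])
qed

theorem proposition2p5:
  fixes n :: nat and A :: "nat \<Rightarrow> nat \<Rightarrow> bool"
  assumes "oriented_graph n A"
    and "det (walk_mat n A) \<noteq> 0"
  shows "(\<exists>!Q0. Q0 \<in> QSet n A \<and>
            transpose_mat Q0 * skew_adj n A * Q0 = skew_adj n (converse_og A))
         \<and> (\<not> iso_og n A (converse_og A) \<longrightarrow>
            (\<forall>Q0. Q0 \<in> QSet n A \<and>
               transpose_mat Q0 * skew_adj n A * Q0 = skew_adj n (converse_og A)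
               \<longrightarrow> \<not> perm_matrix n Q0))"
proof -
  define S e where "S = skew_adj n A" and "e = ones_vec n"
  have S: "S \<in> carrier_mat n n" "transpose_mat S = - S" and e: "e \<in> carrier_vec n"
    unfolding S_def e_def using transpose_skew_adj[OF assms(1)] by simp_all
  have converse: "skew_adj n (converse_og A) = - S"
    unfolding skew_adj_converse_og S_def[symmetric] by (rule S(2))
  have walk: "walk_mat n A = krylov_mat n S e" "walk_mat n (converse_og A) = krylov_mat n (- S) e"
    unfolding walk_mat_krylov converse S_def e_def by simp_all
  obtain V where V: "V \<in> carrier_mat n n" "krylov_mat n S e * V = 1\<^sub>m n"
      "V * krylov_mat n S e = 1\<^sub>m n" and V_rational: "rational_mat V"
    by (rule rational_mat_inverse[OF krylov_mat_carrier
          rational_walk_mat[of n A, unfolded walk(1)] assms(2)[unfolded walk(1)]])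
  define Q0 where "Q0 = krylov_mat n (- S) e * V"
  have Q0_rational: "rational_mat Q0"
    unfolding Q0_def using rational_walk_mat[of n "converse_og A", unfolded walk(2)] V_rational
    by (rule rational_mat_mult[OF krylov_mat_carrier V(1)])
  have "Q0 \<in> QSet n A \<and> transpose_mat Q0 * skew_adj n A * Q0 = skew_adj n (converse_og A)"
    unfolding QSet_def orth_mat_def regular_mat_def converse S_def[symmetric] e_def[symmetric]
    using krylov_reflection[OF S e V] V(1) Q0_rational
      oriented_graph_converse_og[OF assms(1)] gen_cospectral_converse_og[of n A]
    by (auto simp: Q0_def converse)
  moreover have "Q = Q0"
    if "Q \<in> QSet n A" and "transpose_mat Q * skew_adj n A * Q = skew_adj n (converse_og A)" for Q
    using that krylov_reflection_unique[OF S e V(1,2)]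
    unfolding QSet_def orth_mat_def regular_mat_def Q0_def converse S_def[symmetric] e_def[symmetric]
    by blast
  ultimately show ?thesis
    unfolding iso_og_def by blast
qed

end
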